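(* In the model below, assume $\lambda<\mu$. Under any transmission scheme, the expected per-packet decoding delay at any receiver (time from a packet's arrival at the sender until it is decoded by that receiver) is $\Omega\left(\frac{1}{1-\rho}\right)$ as $\rho=\lambda/\mu\to1^-$ (with $\lambda,\mu\in(0,1)$ and one of them held fixed).
   Context: Model: a sender broadcasts a stream of packets to $n\ge1$ receivers. Packets are vectors over a finite field; time is slotted; in each slot one packet arrives at the sender with probability $\lambda$, independently across slots. The sender transmits at most one packet (a linear combination of the packets it holds) per slot; each receiver independently receives it with probability $\mu$, and otherwise suffers an erasure, independently across receivers and slots; feedback is perfect. $\rho=\lambda/\mu$. *)

theory Defs
  imports "HOL-Probability.Probability"
begin

text \<open>Outcome of one time slot: whether a packet arrives at the sender, and for each
receiver j whether it receives the sender's transmission in that slot.\<close>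
type_synonym slot = "bool \<times> (nat \<Rightarrow> bool)"

definition slot_pmf :: "real \<Rightarrow> real \<Rightarrow> nat \<Rightarrow> slot pmf" where
  "slot_pmf lam mu n = pair_pmf (bernoulli_pmf lam) (Pi_pmf {..<n} False (\<lambda>_. bernoulli_pmf mu))"

definition sample_space :: "real \<Rightarrow> real \<Rightarrow> nat \<Rightarrow> slot stream measure" where
  "sample_space lam mu n = stream_space (measure_pmf (slot_pmf lam mu n))"

text \<open>Number of packets arrived up to and including slot t (packets are numbered 0,1,2,...).\<close>
definition arrived :: "slot stream \<Rightarrow> nat \<Rightarrow> nat" where
  "arrived \<omega> t = card {s. s \<le> t \<and> fst (\<omega> !! s)}"

definition arrival_time :: "slot stream \<Rightarrow> nat \<Rightarrow> nat" where
  "arrival_time \<omega> k = (LEAST t. k < arrived \<omega> t)"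

text \<open>A (deterministic, causal) transmission scheme: in slot t, given the history of the
previous slots (arrivals and all receivers' feedback) and whether a packet arrives in slot t,
it chooses the coefficient vector (indexed by packet number) of the linear combination it sends.
The zero vector means no transmission.\<close>
type_synonym 'F scheme = "nat \<Rightarrow> slot list \<Rightarrow> bool \<Rightarrow> (nat \<Rightarrow> 'F)"

text \<open>The sender can only combine packets it holds, i.e. packets that have arrived.\<close>
definition admissible :: "('F::zero) scheme \<Rightarrow> bool" where
  "admissible \<sigma> \<longleftrightarrow> (\<forall>t hist b i. \<sigma> t hist b i \<noteq> 0 \<longrightarrow>
      i < length (filter fst hist) + (if b then 1 else 0))"

definition coeff :: "'F scheme \<Rightarrow> slot stream \<Rightarrow> nat \<Rightarrow> (nat \<Rightarrow> 'F)" where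
  "coeff \<sigma> \<omega> t = \<sigma> t (stake t \<omega>) (fst (\<omega> !! t))"

definition decoded :: "('F::field) scheme \<Rightarrow> nat \<Rightarrow> slot stream \<Rightarrow> nat \<Rightarrow> nat \<Rightarrow> bool" where
  "decoded \<sigma> j \<omega> k d \<longleftrightarrow> (\<exists>f :: nat \<Rightarrow> 'F. \<forall>i.
      (if i = k then 1 else 0) = (\<Sum>t\<in>{t. t \<le> d \<and> snd (\<omega> !! t) j}. f t * coeff \<sigma> \<omega> t i))"

text \<open>Decoding delay of packet k at receiver j: from its arrival (start of its arrival slot)
until its decoding (end of the decoding slot); infinite if never decoded.\<close>
definition delay :: "('F::field) scheme \<Rightarrow> nat \<Rightarrow> slot stream \<Rightarrow> nat \<Rightarrow> ennreal" where
  "delay \<sigma> j \<omega> k = (if \<exists>d. decoded \<sigma> j \<omega> k d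
      then of_nat (Suc (LEAST d. decoded \<sigma> j \<omega> k d) - arrival_time \<omega> k) else \<infinity>)"

definition exp_delay :: "real \<Rightarrow> real \<Rightarrow> nat \<Rightarrow> ('F::field) scheme \<Rightarrow> nat \<Rightarrow> nat \<Rightarrow> ennreal" where
  "exp_delay lam mu n \<sigma> j k = (\<integral>\<^sup>+ \<omega>. delay \<sigma> j \<omega> k \<partial>sample_space lam mu n)"

definition avg_delay :: "real \<Rightarrow> real \<Rightarrow> nat \<Rightarrow> ('F::field) scheme \<Rightarrow> nat \<Rightarrow> ennreal" where
  "avg_delay lam mu n \<sigma> j = limsup (\<lambda>N. (\<Sum>k<N. exp_delay lam mu n \<sigma> j k) / of_nat N)"

end

theory Submission
  imports Defs "HOL-Library.Function_Algebras" "HOL-Real_Asymp.Real_Asymp"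
begin

text \<open>Compare receiver \<open>j\<close> with the virtual queue fed by the arrivals and served by the receptions
  at \<open>j\<close>. Packets that arrive during a window of slots can be decoded at most one per reception in
  that window, and the queue length is the excess of arrivals over receptions in some window
  ending now; hence at every slot at least that many packets are pending at \<open>j\<close>, and the total
  delay of the first \<open>N\<close> packets dominates the summed queue lengths. The drift of \<open>q (q + 1)\<close>
  is exactly \<open>2 \<lambda> (1 - \<mu>) - 2 (\<mu> - \<lambda>) q\<close>, and an exponential Lyapunov function keeps
  \<open>E q (q + 1)\<close> bounded, so the time average of \<open>E q\<close> tends to
  \<open>\<lambda> (1 - \<mu>) / (\<mu> - \<lambda>) = \<rho> (1 - \<mu>) / (1 - \<rho>)\<close>.\<close>

definition arrivals_before :: "slot stream \<Rightarrow> nat \<Rightarrow> nat" where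
  "arrivals_before \<omega> m = card {t. t < m \<and> fst (\<omega> !! t)}"

definition receptions_before :: "nat \<Rightarrow> slot stream \<Rightarrow> nat \<Rightarrow> nat" where
  "receptions_before j \<omega> m = card {t. t < m \<and> snd (\<omega> !! t) j}"

lemma card_less_Suc_conj:
  "card {t. t < Suc m \<and> P t} = card {t. t < m \<and> P t} + of_bool (P m)"
proof -
  have "{t. t < Suc m \<and> P t} = {t. t < m \<and> P t} \<union> (if P m then {m} else {})"
    by (auto simp: less_Suc_eq)
  then show ?thesis by (auto simp: card_insert_if less_Suc_eq)
qed

lemma arrivals_before_0 [simp]: "arrivals_before \<omega> 0 = 0"
  by (simp add: arrivals_before_def)

lemma arrivals_before_Suc:
  "arrivals_before \<omega> (Suc m) = arrivals_before \<omega> m + of_bool (fst (\<omega> !! m))"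
  unfolding arrivals_before_def by (rule card_less_Suc_conj)

lemma receptions_before_Suc:
  "receptions_before j \<omega> (Suc m) = receptions_before j \<omega> m + of_bool (snd (\<omega> !! m) j)"
  unfolding receptions_before_def by (rule card_less_Suc_conj)

lemma arrivals_before_mono: "m \<le> m' \<Longrightarrow> arrivals_before \<omega> m \<le> arrivals_before \<omega> m'"
  unfolding arrivals_before_def by (rule card_mono) auto

lemma receptions_before_mono: "m \<le> m' \<Longrightarrow> receptions_before j \<omega> m \<le> receptions_before j \<omega> m'"
  unfolding receptions_before_def by (rule card_mono) auto

lemma arrivals_before_le: "arrivals_before \<omega> m \<le> m"
  unfolding arrivals_before_def using card_mono[of "{..<m}" "{t. t < m \<and> fst (\<omega> !! t)}"] by auto

lemma card_receptions_window:
  assumes "m0 \<le> m"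
  shows "card {t. m0 \<le> t \<and> t < m \<and> snd (\<omega> !! t) j} = receptions_before j \<omega> m - receptions_before j \<omega> m0"
proof -
  have "{t. m0 \<le> t \<and> t < m \<and> snd (\<omega> !! t) j} =
      {t. t < m \<and> snd (\<omega> !! t) j} - {t. t < m0 \<and> snd (\<omega> !! t) j}"
    by auto
  moreover have "{t. t < m0 \<and> snd (\<omega> !! t) j} \<subseteq> {t. t < m \<and> snd (\<omega> !! t) j}"
    using assms by auto
  ultimately show ?thesis unfolding receptions_before_def by (simp add: card_Diff_subset)
qed

lemma length_filter_fst_stake: "length (filter fst (stake t \<omega>)) = arrivals_before \<omega> t"
  by (induction t) (auto simp del: stake.simps(2) simp add: stake_Suc arrivals_before_Suc)

lemma arrived_eq_arrivals_before: "arrived \<omega> d = arrivals_before \<omega> (Suc d)"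
  unfolding arrived_def arrivals_before_def by (simp add: less_Suc_eq_le)

lemma coeff_eq_0_if_not_arrived:
  assumes "admissible \<sigma>" "arrivals_before \<omega> (Suc t) \<le> i"
  shows "coeff \<sigma> \<omega> t i = 0"
proof -
  have "length (filter fst (stake t \<omega>)) + (if fst (\<omega> !! t) then 1 else 0) = arrivals_before \<omega> (Suc t)"
    by (simp add: length_filter_fst_stake arrivals_before_Suc)
  then show ?thesis using assms unfolding admissible_def coeff_def by (metis not_le)
qed

section \<open>Decoding needs one reception per packet\<close>

definition scale_fun :: "'F::field \<Rightarrow> ('a \<Rightarrow> 'F) \<Rightarrow> ('a \<Rightarrow> 'F)" where
  "scale_fun c f = (\<lambda>i. c * f i)"

interpretation fun_vs: vector_space "scale_fun :: 'F::field \<Rightarrow> _"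
  by unfold_locales (auto simp: scale_fun_def fun_eq_iff algebra_simps)

lemma sum_fun_apply: "(\<Sum>t\<in>T. g t) i = (\<Sum>t\<in>T. g t i)"
  for g :: "'b \<Rightarrow> 'a \<Rightarrow> 'F::comm_monoid_add"
  by (induction T rule: infinite_finite_induct) auto

definition unit_fun :: "'a \<Rightarrow> 'a \<Rightarrow> 'F::field" where
  "unit_fun k = (\<lambda>i. if i = k then 1 else 0)"

lemma inj_unit_fun: "inj (unit_fun :: 'a \<Rightarrow> 'a \<Rightarrow> 'F::field)"
  by (rule injI) (metis unit_fun_def zero_neq_one)

lemma independent_unit_funs: "fun_vs.independent (unit_fun ` K :: ('a \<Rightarrow> 'F::field) set)"
proof -
  have "unit_fun k \<notin> fun_vs.span (unit_fun ` K - {unit_fun k} :: ('a \<Rightarrow> 'F) set)" for k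
  proof -
    have "fun_vs.span (unit_fun ` K - {unit_fun k} :: ('a \<Rightarrow> 'F) set) \<subseteq> {u. u k = 0}"
    proof (rule fun_vs.span_minimal)
      show "unit_fun ` K - {unit_fun k} \<subseteq> {u :: 'a \<Rightarrow> 'F. u k = 0}"
        by (auto simp: unit_fun_def)
      show "fun_vs.subspace {u :: 'a \<Rightarrow> 'F. u k = 0}"
        by (auto simp: fun_vs.subspace_def scale_fun_def)
    qed
    then show ?thesis by (auto simp: unit_fun_def)
  qed
  then show ?thesis unfolding fun_vs.dependent_def by auto
qed

text \<open>The coefficients of a transmission with the coordinates of the packets that arrived before
  slot \<open>m0\<close> set to zero. Since such packets cannot appear in transmissions before \<open>m0\<close>, a later
  packet decoded by the end of slot \<open>d\<close> is already decoded by the projected receptions from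
  slot \<open>m0\<close> to \<open>d\<close>.\<close>

definition projected_coeff :: "('F::field) scheme \<Rightarrow> slot stream \<Rightarrow> nat \<Rightarrow> nat \<Rightarrow> nat \<Rightarrow> 'F" where
  "projected_coeff \<sigma> \<omega> m0 t = (\<lambda>i. if arrivals_before \<omega> m0 \<le> i then coeff \<sigma> \<omega> t i else 0)"

lemma unit_fun_in_span_projected_coeff:
  fixes \<sigma> :: "('F::field) scheme"
  assumes adm: "admissible \<sigma>" and m0: "m0 \<le> Suc d"
    and k: "arrivals_before \<omega> m0 \<le> k" "decoded \<sigma> j \<omega> k d"
  shows "unit_fun k \<in> fun_vs.span (projected_coeff \<sigma> \<omega> m0 ` {t. m0 \<le> t \<and> t < Suc d \<and> snd (\<omega> !! t) j})"
    (is "_ \<in> fun_vs.span (?w ` ?T)")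
proof -
  from k(2) obtain f :: "nat \<Rightarrow> 'F" where f: "\<And>i. (if i = k then 1 else 0) =
      (\<Sum>t\<in>{t. t \<le> d \<and> snd (\<omega> !! t) j}. f t * coeff \<sigma> \<omega> t i)"
    unfolding decoded_def by blast
  have "unit_fun k i = (\<Sum>t\<in>?T. scale_fun (f t) (?w t)) i" for i
  proof (cases "arrivals_before \<omega> m0 \<le> i")
    case False
    then show ?thesis using k(1) by (auto simp: unit_fun_def sum_fun_apply scale_fun_def projected_coeff_def)
  next
    case True
    have split: "{t. t \<le> d \<and> snd (\<omega> !! t) j} = ?T \<union> {t. t < m0 \<and> snd (\<omega> !! t) j}"
      using m0 by auto
    have early: "(\<Sum>t\<in>{t. t < m0 \<and> snd (\<omega> !! t) j}. f t * coeff \<sigma> \<omega> t i) = 0"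
    proof (rule sum.neutral, safe)
      fix t assume "t < m0"
      then have "arrivals_before \<omega> (Suc t) \<le> i"
        using arrivals_before_mono[of "Suc t" m0 \<omega>] True by auto
      then show "f t * coeff \<sigma> \<omega> t i = 0" using coeff_eq_0_if_not_arrived[OF adm] by simp
    qed
    have "unit_fun k i = (\<Sum>t\<in>{t. t \<le> d \<and> snd (\<omega> !! t) j}. f t * coeff \<sigma> \<omega> t i)"
      using f[of i] by (simp add: unit_fun_def)
    also have "\<dots> = (\<Sum>t\<in>?T. f t * coeff \<sigma> \<omega> t i)"
      unfolding split by (subst sum.union_disjoint) (use early in auto)
    finally show ?thesis using True by (simp add: sum_fun_apply scale_fun_def projected_coeff_def)
  qed
  then have "unit_fun k = (\<Sum>t\<in>?T. scale_fun (f t) (?w t))" by blast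
  also have "\<dots> \<in> fun_vs.span (?w ` ?T)"
    by (intro fun_vs.span_sum fun_vs.span_scale fun_vs.span_base) auto
  finally show ?thesis .
qed

lemma card_decoded_le_receptions:
  fixes \<sigma> :: "('F::field) scheme"
  assumes adm: "admissible \<sigma>" and m0: "m0 \<le> Suc d"
  shows "finite {k. arrivals_before \<omega> m0 \<le> k \<and> decoded \<sigma> j \<omega> k d}"
    and "card {k. arrivals_before \<omega> m0 \<le> k \<and> decoded \<sigma> j \<omega> k d}
      \<le> receptions_before j \<omega> (Suc d) - receptions_before j \<omega> m0"
proof -
  let ?K = "{k. arrivals_before \<omega> m0 \<le> k \<and> decoded \<sigma> j \<omega> k d}"
  let ?T = "{t. m0 \<le> t \<and> t < Suc d \<and> snd (\<omega> !! t) j}"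
  have "finite ?T" by auto
  have "unit_fun ` ?K \<subseteq> fun_vs.span (projected_coeff \<sigma> \<omega> m0 ` ?T)"
    using unit_fun_in_span_projected_coeff[OF adm m0] by blast
  then have "finite (unit_fun ` ?K :: (nat \<Rightarrow> 'F) set) \<and>
      card (unit_fun ` ?K :: (nat \<Rightarrow> 'F) set) \<le> card (projected_coeff \<sigma> \<omega> m0 ` ?T)"
    by (rule fun_vs.independent_span_bound[OF finite_imageI[OF \<open>finite ?T\<close>] independent_unit_funs])
  note bound = conjunct1[OF this] conjunct2[OF this]
  have inj: "inj_on (unit_fun :: nat \<Rightarrow> nat \<Rightarrow> 'F) ?K"
    using inj_unit_fun by (rule inj_on_subset) simp
  show "finite ?K" using finite_imageD[OF bound(1) inj] .
  have "card ?K = card (unit_fun ` ?K :: (nat \<Rightarrow> 'F) set)" using card_image[OF inj] by simp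
  also have "\<dots> \<le> card (projected_coeff \<sigma> \<omega> m0 ` ?T)" by (rule bound(2))
  also have "\<dots> \<le> card ?T" by (rule card_image_le[OF \<open>finite ?T\<close>])
  also have "\<dots> = receptions_before j \<omega> (Suc d) - receptions_before j \<omega> m0"
    using card_receptions_window[OF m0] by simp
  finally show "card ?K \<le> receptions_before j \<omega> (Suc d) - receptions_before j \<omega> m0" .
qed

lemma decoded_mono:
  assumes "decoded \<sigma> j \<omega> k d" "d \<le> d'"
  shows "decoded \<sigma> j \<omega> k d'"
proof -
  from assms(1) obtain f where f: "\<forall>i. (if i = k then 1 else 0) =
      (\<Sum>t\<in>{t. t \<le> d \<and> snd (\<omega> !! t) j}. f t * coeff \<sigma> \<omega> t i)"
    unfolding decoded_def by blast
  define f' where "f' t = (if t \<le> d then f t else 0)" for t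
  have "\<forall>i. (if i = k then 1 else 0) =
      (\<Sum>t\<in>{t. t \<le> d' \<and> snd (\<omega> !! t) j}. f' t * coeff \<sigma> \<omega> t i)"
  proof
    fix i
    have "(\<Sum>t\<in>{t. t \<le> d' \<and> snd (\<omega> !! t) j}. f' t * coeff \<sigma> \<omega> t i)
       = (\<Sum>t\<in>{t. t \<le> d \<and> snd (\<omega> !! t) j}. f' t * coeff \<sigma> \<omega> t i)"
      by (rule sum.mono_neutral_right) (use assms(2) in \<open>auto simp: f'_def\<close>)
    also have "\<dots> = (\<Sum>t\<in>{t. t \<le> d \<and> snd (\<omega> !! t) j}. f t * coeff \<sigma> \<omega> t i)"
      by (rule sum.cong) (auto simp: f'_def)
    finally show "(if i = k then 1 else 0) =
        (\<Sum>t\<in>{t. t \<le> d' \<and> snd (\<omega> !! t) j}. f' t * coeff \<sigma> \<omega> t i)"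
      using f by simp
  qed
  then show ?thesis unfolding decoded_def by blast
qed

section \<open>The virtual queue\<close>

definition lindley :: "nat \<Rightarrow> bool \<Rightarrow> bool \<Rightarrow> nat" where
  "lindley l a r = nat (int l + of_bool a - of_bool r)"

lemma lindley_simps [simp]:
  "lindley l True True = l" "lindley l True False = Suc l"
  "lindley l False True = l - 1" "lindley l False False = l"
  unfolding lindley_def by auto

primrec queue :: "nat \<Rightarrow> nat \<Rightarrow> nat \<Rightarrow> slot stream \<Rightarrow> nat" where
  "queue j l 0 \<omega> = l"
| "queue j l (Suc t) \<omega> = lindley (queue j l t \<omega>) (fst (\<omega> !! t)) (snd (\<omega> !! t) j)"

lemma queue_Suc_stl: "queue j l (Suc t) \<omega> = queue j (lindley l (fst (shd \<omega>)) (snd (shd \<omega>) j)) t (stl \<omega>)"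
  by (induction t) auto

lemma queue_eq_0_or_window:
  "queue j 0 m \<omega> = 0 \<or> (\<exists>m0\<le>m. int (queue j 0 m \<omega>) =
     (int (arrivals_before \<omega> m) - int (arrivals_before \<omega> m0)) -
     (int (receptions_before j \<omega> m) - int (receptions_before j \<omega> m0)))"
proof (induction m)
  case 0
  then show ?case by simp
next
  case (Suc m)
  let ?q = "queue j 0 m \<omega>" and ?a = "fst (\<omega> !! m)" and ?r = "snd (\<omega> !! m) j"
  show ?case
  proof (cases "int ?q + of_bool ?a - of_bool ?r \<le> 0")
    case True
    then show ?thesis by (simp add: lindley_def)
  next
    case False
    then have step: "int (queue j 0 (Suc m) \<omega>) = int ?q + of_bool ?a - of_bool ?r"
      by (simp add: lindley_def)
    from Suc show ?thesis
    proof
      assume "?q = 0"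
      with False have "?a \<and> \<not> ?r" by auto
      with \<open>?q = 0\<close> step show ?thesis
        by (intro disjI2 exI[of _ m]) (auto simp: arrivals_before_Suc receptions_before_Suc)
    next
      assume "\<exists>m0\<le>m. int ?q = (int (arrivals_before \<omega> m) - int (arrivals_before \<omega> m0)) -
        (int (receptions_before j \<omega> m) - int (receptions_before j \<omega> m0))"
      then obtain m0 where "m0 \<le> m" "int ?q = (int (arrivals_before \<omega> m) - int (arrivals_before \<omega> m0)) -
        (int (receptions_before j \<omega> m) - int (receptions_before j \<omega> m0))"
        by blast
      with step show ?thesis
        by (intro disjI2 exI[of _ m0]) (auto simp: arrivals_before_Suc receptions_before_Suc)
    qed
  qed
qed

lemma queue_le_card_undecoded:
  fixes \<sigma> :: "('F::field) scheme"
  assumes adm: "admissible \<sigma>"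
  shows "queue j 0 (Suc d) \<omega> \<le> card {k. k < arrivals_before \<omega> (Suc d) \<and> \<not> decoded \<sigma> j \<omega> k d}"
proof -
  let ?A = "arrivals_before \<omega>" and ?R = "receptions_before j \<omega>"
  define U where "U = {k. k < ?A (Suc d) \<and> \<not> decoded \<sigma> j \<omega> k d}"
  from queue_eq_0_or_window[of j "Suc d" \<omega>] show ?thesis
  proof
    assume "\<exists>m0\<le>Suc d. int (queue j 0 (Suc d) \<omega>) =
      (int (?A (Suc d)) - int (?A m0)) - (int (?R (Suc d)) - int (?R m0))"
    then obtain m0 where m0: "m0 \<le> Suc d" and queue_eq: "int (queue j 0 (Suc d) \<omega>) =
      (int (?A (Suc d)) - int (?A m0)) - (int (?R (Suc d)) - int (?R m0))"
      by blast
    define D where "D = {k. ?A m0 \<le> k \<and> decoded \<sigma> j \<omega> k d}"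
    have D: "finite D" "card D \<le> ?R (Suc d) - ?R m0"
      unfolding D_def by (rule card_decoded_le_receptions[OF adm m0])+
    have "{?A m0..<?A (Suc d)} \<subseteq> U \<union> D" unfolding U_def D_def by auto
    then have "card {?A m0..<?A (Suc d)} \<le> card (U \<union> D)"
      by (intro card_mono) (auto simp: U_def D)
    also have "\<dots> \<le> card U + card D" by (rule card_Un_le)
    finally have "?A (Suc d) - ?A m0 \<le> card U + (?R (Suc d) - ?R m0)"
      using D by simp
    moreover have "?A m0 \<le> ?A (Suc d)" "?R m0 \<le> ?R (Suc d)"
      using m0 by (auto intro: arrivals_before_mono receptions_before_mono)
    ultimately show ?thesis using queue_eq unfolding U_def[symmetric] by linarith
  qed simp
qed

section \<open>Comparing the queue with the delays\<close>

definition undecoded_slots :: "('F::field) scheme \<Rightarrow> nat \<Rightarrow> nat \<Rightarrow> nat \<Rightarrow> slot stream \<Rightarrow> nat" where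
  "undecoded_slots \<sigma> j N k \<omega> = card {d. d < N \<and> k < arrivals_before \<omega> (Suc d) \<and> \<not> decoded \<sigma> j \<omega> k d}"

lemma undecoded_slots_le_delay: "of_nat (undecoded_slots \<sigma> j N k \<omega>) \<le> delay \<sigma> j \<omega> k"
proof (cases "\<exists>d. decoded \<sigma> j \<omega> k d")
  case True
  define d0 where "d0 = (LEAST d. decoded \<sigma> j \<omega> k d)"
  have d0: "decoded \<sigma> j \<omega> k d0" unfolding d0_def using True by (rule LeastI_ex)
  have "{d. d < N \<and> k < arrivals_before \<omega> (Suc d) \<and> \<not> decoded \<sigma> j \<omega> k d} \<subseteq> {arrival_time \<omega> k..<d0}"
  proof (rule subsetI, clarify)
    fix d assume d: "k < arrivals_before \<omega> (Suc d)" "\<not> decoded \<sigma> j \<omega> k d"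
    have "arrival_time \<omega> k \<le> d" unfolding arrival_time_def
      by (rule Least_le) (simp add: arrived_eq_arrivals_before d)
    moreover have "d < d0" using decoded_mono[OF d0, of d] d by (meson not_le)
    ultimately show "d \<in> {arrival_time \<omega> k..<d0}" by simp
  qed
  then have "undecoded_slots \<sigma> j N k \<omega> \<le> card {arrival_time \<omega> k..<d0}"
    unfolding undecoded_slots_def by (intro card_mono) auto
  then have "undecoded_slots \<sigma> j N k \<omega> \<le> Suc d0 - arrival_time \<omega> k" by simp
  then show ?thesis unfolding delay_def d0_def[symmetric] using True by simp
next
  case False
  then show ?thesis unfolding delay_def by auto
qed

lemma sum_card_swap:
  "(\<Sum>k<(N::nat). card {d. d < N \<and> P k d}) = (\<Sum>d<N. card {k. k < N \<and> P k d})"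
proof -
  have card_eq: "card {d. d < N \<and> Q d} = (\<Sum>d<N. of_bool (Q d))" for Q
    by (simp add: sum.If_cases Int_def conj_commute)
  show ?thesis unfolding card_eq by (rule sum.swap)
qed

lemma sum_queue_le_sum_undecoded_slots:
  fixes \<sigma> :: "('F::field) scheme"
  assumes adm: "admissible \<sigma>"
  shows "(\<Sum>d<N. queue j 0 (Suc d) \<omega>) \<le> (\<Sum>k<N. undecoded_slots \<sigma> j N k \<omega>)"
proof -
  have "(\<Sum>d<N. queue j 0 (Suc d) \<omega>) \<le>
      (\<Sum>d<N. card {k. k < arrivals_before \<omega> (Suc d) \<and> \<not> decoded \<sigma> j \<omega> k d})"
    by (rule sum_mono) (rule queue_le_card_undecoded[OF adm])
  also have "\<dots> = (\<Sum>d<N. card {k. k < N \<and> k < arrivals_before \<omega> (Suc d) \<and> \<not> decoded \<sigma> j \<omega> k d})"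
  proof (rule sum.cong[OF refl])
    fix d assume "d \<in> {..<N}"
    then have "arrivals_before \<omega> (Suc d) \<le> N" using arrivals_before_le[of \<omega> "Suc d"] by auto
    then show "card {k. k < arrivals_before \<omega> (Suc d) \<and> \<not> decoded \<sigma> j \<omega> k d} =
        card {k. k < N \<and> k < arrivals_before \<omega> (Suc d) \<and> \<not> decoded \<sigma> j \<omega> k d}"
      by (intro arg_cong[where f=card]) auto
  qed
  also have "\<dots> = (\<Sum>k<N. undecoded_slots \<sigma> j N k \<omega>)"
    unfolding undecoded_slots_def by (rule sum_card_swap[symmetric])
  finally show ?thesis .
qed

text \<open>A scheme may depend arbitrarily on the history, so the delays need not be measurable. But
  almost surely no slot lets a receiver \<open>j \<ge> n\<close> receive; these proper slots form a finite set,
  and functions of finitely many proper slots are measurable.\<close>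

lemma arrivals_before_cong:
  assumes "\<And>t. t < m \<Longrightarrow> \<omega> !! t = \<omega>' !! t"
  shows "arrivals_before \<omega> m = arrivals_before \<omega>' m"
  unfolding arrivals_before_def by (intro arg_cong[where f=card] Collect_cong) (use assms in auto)

lemma decoded_cong:
  assumes "\<And>t. t \<le> d \<Longrightarrow> \<omega> !! t = \<omega>' !! t"
  shows "decoded \<sigma> j \<omega> k d = decoded \<sigma> j \<omega>' k d"
proof -
  have "stake t \<omega> = stake t \<omega>'" if "t \<le> d" for t
    by (rule nth_equalityI) (use assms that in auto)
  then have coeff: "coeff \<sigma> \<omega> t = coeff \<sigma> \<omega>' t" if "t \<le> d" for t
    unfolding coeff_def using assms that by simp
  have "{t. t \<le> d \<and> snd (\<omega> !! t) j} = {t. t \<le> d \<and> snd (\<omega>' !! t) j}" using assms by auto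
  then show ?thesis
    unfolding decoded_def
    by (intro ex_cong1 all_cong1 arg_cong2[where f="(=)"] refl sum.cong) (auto simp: coeff)
qed

lemma undecoded_slots_cong:
  assumes "\<And>t. t < N \<Longrightarrow> \<omega> !! t = \<omega>' !! t"
  shows "undecoded_slots \<sigma> j N k \<omega> = undecoded_slots \<sigma> j N k \<omega>'"
proof -
  have "arrivals_before \<omega> (Suc d) = arrivals_before \<omega>' (Suc d) \<and> decoded \<sigma> j \<omega> k d = decoded \<sigma> j \<omega>' k d"
    if "d < N" for d
    using that by (intro conjI arrivals_before_cong decoded_cong assms) auto
  then show ?thesis
    unfolding undecoded_slots_def by (intro arg_cong[where f=card] Collect_cong) auto
qed

definition proper_slots :: "nat \<Rightarrow> slot set" where
  "proper_slots n = {x. \<forall>i\<ge>n. \<not> snd x i}"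

lemma finite_proper_slots: "finite (proper_slots n)"
proof -
  have "{f :: nat \<Rightarrow> bool. \<forall>i\<ge>n. \<not> f i} = (\<lambda>Z i. i \<in> Z) ` Pow {..<n}"
  proof (intro equalityI subsetI)
    fix f :: "nat \<Rightarrow> bool" assume "f \<in> {f. \<forall>i\<ge>n. \<not> f i}"
    then have "f = (\<lambda>i. i \<in> {i. i < n \<and> f i})" by (auto simp: fun_eq_iff not_le[symmetric])
    then show "f \<in> (\<lambda>Z i. i \<in> Z) ` Pow {..<n}" by blast
  qed auto
  then have "finite {f :: nat \<Rightarrow> bool. \<forall>i\<ge>n. \<not> f i}" by simp
  moreover have "proper_slots n = UNIV \<times> {f :: nat \<Rightarrow> bool. \<forall>i\<ge>n. \<not> f i}"
    unfolding proper_slots_def by auto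
  ultimately show ?thesis by simp
qed

lemma AE_proper_slots: "AE \<omega> in sample_space lam mu n. \<forall>i. \<omega> !! i \<in> proper_slots n"
proof -
  have "AE x in measure_pmf (slot_pmf lam mu n). x \<in> proper_slots n"
  proof (subst AE_measure_pmf_iff, safe)
    fix x assume "x \<in> set_pmf (slot_pmf lam mu n)"
    then have "snd x \<in> set_pmf (Pi_pmf {..<n} False (\<lambda>_. bernoulli_pmf mu))"
      unfolding slot_pmf_def by auto
    then show "x \<in> proper_slots n"
      using set_Pi_pmf_subset[of "{..<n}" False "\<lambda>_. bernoulli_pmf mu"]
      unfolding proper_slots_def by auto
  qed
  then have "AE \<omega> in sample_space lam mu n. stream_all (\<lambda>x. x \<in> proper_slots n) \<omega>"
    unfolding sample_space_def
    by (intro prob_space.AE_stream_all[OF prob_space_measure_pmf]) auto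
  then show ?thesis by (auto elim!: eventually_mono simp: sset_range)
qed

lemma pred_prefix:
  assumes "finite S"
  shows "Measurable.pred (stream_space (measure_pmf p)) (\<lambda>\<omega>. (\<forall>i<m. \<omega> !! i \<in> S) \<and> P (stake m \<omega>))"
proof -
  define L where "L = {ys. set ys \<subseteq> S \<and> length ys = m \<and> P ys}"
  have "finite L" unfolding L_def
    by (rule finite_subset[OF _ finite_lists_length_eq[OF assms, of m]]) auto
  moreover have "(\<forall>i<m. \<omega> !! i \<in> S) \<and> P (stake m \<omega>) \<longleftrightarrow> (\<exists>ys\<in>L. \<forall>i<m. \<omega> !! i = ys ! i)" for \<omega>
  proof
    assume "(\<forall>i<m. \<omega> !! i \<in> S) \<and> P (stake m \<omega>)"
    then show "\<exists>ys\<in>L. \<forall>i<m. \<omega> !! i = ys ! i"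
      by (intro bexI[of _ "stake m \<omega>"]) (auto simp: L_def in_set_conv_nth)
  next
    assume "\<exists>ys\<in>L. \<forall>i<m. \<omega> !! i = ys ! i"
    then obtain ys where ys: "ys \<in> L" "\<forall>i<m. \<omega> !! i = ys ! i" by blast
    then have "stake m \<omega> = ys" by (intro nth_equalityI) (auto simp: L_def)
    moreover have "\<omega> !! i \<in> S" if "i < m" for i
      using ys that nth_mem[of i ys] by (auto simp: L_def)
    ultimately show "(\<forall>i<m. \<omega> !! i \<in> S) \<and> P (stake m \<omega>)" using ys(1) by (auto simp: L_def)
  qed
  ultimately show ?thesis by simp
qed

lemma measurable_prefix_function:
  assumes "finite S"
  shows "(\<lambda>\<omega>. if \<forall>i<m. \<omega> !! i \<in> S then F (stake m \<omega>) else c)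
    \<in> measurable (stream_space (measure_pmf p)) (count_space UNIV)"
proof (rule measurableI)
  let ?M = "stream_space (measure_pmf p)"
  have prefix: "{\<omega>. (\<forall>i<m. \<omega> !! i \<in> S) \<and> P (stake m \<omega>)} \<in> sets ?M" for P
    using pred_prefix[OF assms, where p=p and m=m and P=P] by (simp add: pred_def space_stream_space)
  fix B
  have "(\<lambda>\<omega>. if \<forall>i<m. \<omega> !! i \<in> S then F (stake m \<omega>) else c) -` B \<inter> space ?M =
      {\<omega>. (\<forall>i<m. \<omega> !! i \<in> S) \<and> F (stake m \<omega>) \<in> B} \<union>
      (if c \<in> B then space ?M - {\<omega>. (\<forall>i<m. \<omega> !! i \<in> S) \<and> True} else {})"
    by (auto simp: space_stream_space split: if_splits)
  also have "\<dots> \<in> sets ?M"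
    using prefix[of "\<lambda>ys. F ys \<in> B"] sets.compl_sets[OF prefix[of "\<lambda>_. True"]]
    by (intro sets.Un) simp_all
  finally show "(\<lambda>\<omega>. if \<forall>i<m. \<omega> !! i \<in> S then F (stake m \<omega>) else c) -` B \<inter> space ?M \<in> sets ?M" .
qed simp

lemma nn_integral_sum_queue_le_sum_exp_delay:
  fixes \<sigma> :: "('F::field) scheme"
  assumes adm: "admissible \<sigma>"
  shows "(\<integral>\<^sup>+\<omega>. of_nat (\<Sum>d<N. queue j 0 (Suc d) \<omega>) \<partial>sample_space lam mu n)
    \<le> (\<Sum>k<N. exp_delay lam mu n \<sigma> j k)"
proof -
  let ?M = "sample_space lam mu n"
  define g :: "nat \<Rightarrow> slot stream \<Rightarrow> ennreal" where "g k \<omega> = of_nat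
      (if \<forall>i<N. \<omega> !! i \<in> proper_slots n then undecoded_slots \<sigma> j N k (stake N \<omega> @- sconst undefined) else 0)"
    for k \<omega>
  have undecoded_stake: "undecoded_slots \<sigma> j N k (stake N \<omega> @- \<omega>') = undecoded_slots \<sigma> j N k \<omega>" for k \<omega> \<omega>'
    by (rule undecoded_slots_cong) (simp add: shift_snth_less)
  have g_measurable: "g k \<in> borel_measurable ?M" for k
    unfolding g_def sample_space_def
    by (rule measurable_compose[OF measurable_prefix_function[OF finite_proper_slots]]) simp
  have g_le_delay: "g k \<omega> \<le> delay \<sigma> j \<omega> k" for k \<omega>
    using undecoded_slots_le_delay[of \<sigma> j N k \<omega>] by (simp add: g_def undecoded_stake)
  have "AE \<omega> in ?M. of_nat (\<Sum>d<N. queue j 0 (Suc d) \<omega>) \<le> (\<Sum>k<N. g k \<omega>)"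
    using AE_proper_slots
  proof eventually_elim
    case (elim \<omega>)
    then have "(\<Sum>k<N. g k \<omega>) = of_nat (\<Sum>k<N. undecoded_slots \<sigma> j N k \<omega>)"
      by (simp add: g_def undecoded_stake)
    then show ?case
      using of_nat_mono[OF sum_queue_le_sum_undecoded_slots[OF adm, where N=N and j=j and \<omega>=\<omega>]]
      by (simp only:)
  qed
  then have "(\<integral>\<^sup>+\<omega>. of_nat (\<Sum>d<N. queue j 0 (Suc d) \<omega>) \<partial>?M) \<le> (\<integral>\<^sup>+\<omega>. (\<Sum>k<N. g k \<omega>) \<partial>?M)"
    by (rule nn_integral_mono_AE)
  also have "\<dots> = (\<Sum>k<N. \<integral>\<^sup>+\<omega>. g k \<omega> \<partial>?M)"
    by (rule nn_integral_sum) (rule g_measurable)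
  also have "\<dots> \<le> (\<Sum>k<N. exp_delay lam mu n \<sigma> j k)"
    unfolding exp_delay_def by (intro sum_mono nn_integral_mono g_le_delay)
  finally show ?thesis .
qed

section \<open>Moments of the queue\<close>

lemma measurable_queue:
  "(\<lambda>\<omega>. queue j l t \<omega>) \<in> measurable (stream_space (measure_pmf p)) (count_space UNIV)"
proof (induction t)
  case (Suc t)
  have "(\<lambda>\<omega>. lindley q (fst (\<omega> !! t)) (snd (\<omega> !! t) j))
      \<in> measurable (stream_space (measure_pmf p)) (count_space UNIV)" for q
    by (rule measurable_compose[OF measurable_snth]) simp
  with Suc show ?case
    by (simp only: queue.simps) (rule measurable_compose_countable)
qed simp

definition expected_queue :: "slot pmf \<Rightarrow> nat \<Rightarrow> (nat \<Rightarrow> ennreal) \<Rightarrow> nat \<Rightarrow> nat \<Rightarrow> ennreal" where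
  "expected_queue p j h l t = (\<integral>\<^sup>+\<omega>. h (queue j l t \<omega>) \<partial>stream_space (measure_pmf p))"

lemma expected_queue_0 [simp]: "expected_queue p j h l 0 = h l"
  unfolding expected_queue_def
  by (simp add: prob_space.emeasure_space_1[OF prob_space.prob_space_stream_space[OF prob_space_measure_pmf]])

lemma expected_queue_Suc:
  "expected_queue p j h l (Suc t) = (\<integral>\<^sup>+x. expected_queue p j h (lindley l (fst x) (snd x j)) t \<partial>p)"
proof -
  have "(\<lambda>\<omega>. h (queue j l (Suc t) \<omega>)) \<in> borel_measurable (stream_space (measure_pmf p))"
    by (rule measurable_compose[OF measurable_queue]) simp
  then show ?thesis
    unfolding expected_queue_def
    by (subst prob_space.nn_integral_stream_space[OF prob_space_measure_pmf]) (simp_all del: queue.simps add: queue_Suc_stl)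
qed

lemma nn_integral_slot_pmf:
  assumes "j < n" "0 \<le> lam" "lam \<le> 1" "0 \<le> mu" "mu \<le> 1"
  shows "(\<integral>\<^sup>+x. h (fst x) (snd x j) \<partial>slot_pmf lam mu n) =
    (h True True * mu + h True False * (1 - mu)) * lam +
    (h False True * mu + h False False * (1 - mu)) * (1 - lam)"
proof -
  have "(\<integral>\<^sup>+r. h a (r j) \<partial>Pi_pmf {..<n} False (\<lambda>_. bernoulli_pmf mu)) =
      h a True * mu + h a False * (1 - mu)" for a
  proof -
    have "map_pmf (\<lambda>r. r j) (Pi_pmf {..<n} False (\<lambda>_. bernoulli_pmf mu)) = bernoulli_pmf mu"
      using assms by (subst Pi_pmf_component) auto
    then have "(\<integral>\<^sup>+r. h a (r j) \<partial>Pi_pmf {..<n} False (\<lambda>_. bernoulli_pmf mu)) =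
        (\<integral>\<^sup>+b. h a b \<partial>bernoulli_pmf mu)"
      by (metis nn_integral_map_pmf)
    then show ?thesis using assms by simp
  qed
  then show ?thesis using assms unfolding slot_pmf_def nn_integral_pair_pmf' by simp
qed

lemma nn_integral_lindley:
  fixes f :: "nat \<Rightarrow> real"
  assumes "j < n" "0 \<le> lam" "lam \<le> 1" "0 \<le> mu" "mu \<le> 1" and nonneg: "\<And>l. 0 \<le> f l"
  shows "(\<integral>\<^sup>+x. ennreal (f (lindley l (fst x) (snd x j))) \<partial>slot_pmf lam mu n) =
    ennreal (lam * (mu * f l + (1 - mu) * f (Suc l)) + (1 - lam) * (mu * f (l - 1) + (1 - mu) * f l))"
  using assms
  by (subst nn_integral_slot_pmf[where h="\<lambda>a r. ennreal (f (lindley l a r))"])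
     (simp_all add: ennreal_plus ennreal_mult' add_nonneg_nonneg mult_nonneg_nonneg mult.commute)

text \<open>The weight \<open>q (q + 1)\<close> makes the drift exactly affine in the queue length \<open>q\<close>, including at
  the empty queue. Both sides are kept free of subtraction, as they live in \<open>ennreal\<close>.\<close>

lemma nn_integral_lindley_quadratic:
  fixes lam mu :: real and l :: nat
  assumes "j < n" "0 \<le> lam" "lam \<le> mu" "mu \<le> 1"
  shows "ennreal (2 * (mu - lam) * l) +
      (\<integral>\<^sup>+x. ennreal (real (lindley l (fst x) (snd x j) * (lindley l (fst x) (snd x j) + 1)))
        \<partial>slot_pmf lam mu n)
    = ennreal (2 * lam * (1 - mu)) + ennreal (real (l * (l + 1)))"
proof -
  let ?f = "\<lambda>l::nat. real (l * (l + 1))"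
  let ?X = "lam * (mu * ?f l + (1 - mu) * ?f (Suc l)) + (1 - lam) * (mu * ?f (l - 1) + (1 - mu) * ?f l)"
  have "0 \<le> ?X" using assms by (intro add_nonneg_nonneg mult_nonneg_nonneg) auto
  have "ennreal (2 * (mu - lam) * l) +
      (\<integral>\<^sup>+x. ennreal (?f (lindley l (fst x) (snd x j))) \<partial>slot_pmf lam mu n)
    = ennreal (2 * (mu - lam) * l) + ennreal ?X"
    using assms by (subst nn_integral_lindley) auto
  also have "\<dots> = ennreal (2 * (mu - lam) * l + ?X)"
    using \<open>0 \<le> ?X\<close> assms by (intro ennreal_plus[symmetric]) auto
  also have "2 * (mu - lam) * l + ?X = 2 * lam * (1 - mu) + ?f l"
    by (cases l) (simp_all add: algebra_simps)
  also have "ennreal \<dots> = ennreal (2 * lam * (1 - mu)) + ennreal (?f l)"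
    using assms by (intro ennreal_plus) auto
  finally show ?thesis .
qed

lemma expected_queue_quadratic_identity:
  fixes lam mu :: real
  assumes "j < n" "0 \<le> lam" "lam \<le> mu" "mu \<le> 1"
  shows "ennreal (2 * (mu - lam)) * (\<Sum>t<N. expected_queue (slot_pmf lam mu n) j (\<lambda>q. ennreal (real q)) l t)
      + expected_queue (slot_pmf lam mu n) j (\<lambda>q. ennreal (real (q * (q + 1)))) l N
    = ennreal (2 * lam * (1 - mu) * N) + ennreal (real (l * (l + 1)))"
proof (induction N arbitrary: l)
  case (Suc N)
  let ?P = "slot_pmf lam mu n" and ?L = "\<lambda>x. lindley l (fst x) (snd x j)"
  let ?e = "\<lambda>q. ennreal (real q)" and ?g = "\<lambda>q. ennreal (real (q * (q + 1)))"
  let ?c = "ennreal (2 * (mu - lam))"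
  have "?c * (\<Sum>t<Suc N. expected_queue ?P j ?e l t) + expected_queue ?P j ?g l (Suc N)
      = ?c * ?e l + (\<integral>\<^sup>+x. ?c * (\<Sum>t<N. expected_queue ?P j ?e (?L x) t) + expected_queue ?P j ?g (?L x) N \<partial>?P)"
    by (simp add: sum.lessThan_Suc_shift expected_queue_Suc nn_integral_sum nn_integral_add
        nn_integral_cmult distrib_left add.assoc del: sum.lessThan_Suc)
  also have "\<dots> = ?c * ?e l + (\<integral>\<^sup>+x. ennreal (2 * lam * (1 - mu) * N) + ?g (?L x) \<partial>?P)"
    by (simp only: Suc.IH)
  also have "\<dots> = ennreal (2 * lam * (1 - mu) * N) + (ennreal (2 * (mu - lam) * l) + (\<integral>\<^sup>+x. ?g (?L x) \<partial>?P))"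
    using assms by (simp add: nn_integral_add measure_pmf.emeasure_space_1 ennreal_mult add_ac)
  also have "\<dots> = ennreal (2 * lam * (1 - mu) * N) + (ennreal (2 * lam * (1 - mu)) + ?g l)"
    using nn_integral_lindley_quadratic[OF assms, of l] by simp
  also have "\<dots> = ennreal (2 * lam * (1 - mu) * Suc N) + ?g l"
    using assms by (simp add: ennreal_plus[symmetric] add.assoc[symmetric] distrib_left del: ennreal_plus)
  finally show ?case .
qed simp

text \<open>The generating function \<open>E z\<^sup>X\<close> of the queue increment \<open>X \<in> {-1, 0, 1}\<close> at a nonempty queue.\<close>

definition increment_mgf :: "real \<Rightarrow> real \<Rightarrow> real \<Rightarrow> real" where
  "increment_mgf lam mu z = lam * (mu + (1 - mu) * z) + (1 - lam) * (mu / z + (1 - mu))"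

lemma increment_mgf_nonneg:
  "0 \<le> lam \<Longrightarrow> lam \<le> 1 \<Longrightarrow> 0 \<le> mu \<Longrightarrow> mu \<le> 1 \<Longrightarrow> 0 < z \<Longrightarrow> 0 \<le> increment_mgf lam mu z"
  unfolding increment_mgf_def by (intro add_nonneg_nonneg mult_nonneg_nonneg) auto

lemma exists_increment_mgf_less_1:
  assumes "0 < lam" "lam < mu" "mu < 1"
  shows "\<exists>z>1. increment_mgf lam mu z < 1"
proof -
  define p q where "p = lam * (1 - mu)" and "q = mu * (1 - lam)"
  have pq: "0 < p" "p < q" using assms unfolding p_def q_def by (auto simp: algebra_simps)
  define z where "z = (p + q) / (2 * p)"
  have "1 < z" using pq unfolding z_def by (simp add: field_simps)
  have "p < q / z" using pq unfolding z_def by (simp add: field_simps)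
  moreover have "increment_mgf lam mu z - 1 = (z - 1) * (p - q / z)"
    using \<open>1 < z\<close> unfolding increment_mgf_def p_def q_def by (simp add: field_simps)
  moreover have "(z - 1) * (p - q / z) < 0"
    using \<open>1 < z\<close> \<open>p < q / z\<close> by (intro mult_pos_neg) auto
  ultimately have "increment_mgf lam mu z < 1" by simp
  with \<open>1 < z\<close> show ?thesis by blast
qed

lemma ennreal_mult_add:
  "0 \<le> a \<Longrightarrow> 0 \<le> b \<Longrightarrow> 0 \<le> c \<Longrightarrow> ennreal a * ennreal b + ennreal c = ennreal (a * b + c)"
  by (simp add: ennreal_mult ennreal_plus)

lemma nn_integral_lindley_power_le:
  assumes "j < n" "0 \<le> lam" "lam \<le> 1" "0 \<le> mu" "mu \<le> 1" "0 < z"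
  shows "(\<integral>\<^sup>+x. ennreal (z ^ lindley l (fst x) (snd x j)) \<partial>slot_pmf lam mu n)
    \<le> ennreal (increment_mgf lam mu z * z ^ l + mu * (1 - lam))"
proof -
  have "lam * (mu * z ^ l + (1 - mu) * z ^ Suc l) + (1 - lam) * (mu * z ^ (l - 1) + (1 - mu) * z ^ l)
      \<le> increment_mgf lam mu z * z ^ l + mu * (1 - lam)"
  proof (cases l)
    case 0
    have "0 \<le> (1 - lam) * mu / z" using assms by simp
    with 0 show ?thesis unfolding increment_mgf_def by (simp add: algebra_simps)
  next
    case (Suc m)
    have "lam * (mu * z ^ l + (1 - mu) * z ^ Suc l) + (1 - lam) * (mu * z ^ (l - 1) + (1 - mu) * z ^ l)
        = increment_mgf lam mu z * z ^ l"
      unfolding increment_mgf_def Suc using assms by (simp add: field_simps)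
    then show ?thesis using assms by simp
  qed
  moreover have "(\<integral>\<^sup>+x. ennreal (z ^ lindley l (fst x) (snd x j)) \<partial>slot_pmf lam mu n) =
      ennreal (lam * (mu * z ^ l + (1 - mu) * z ^ Suc l) + (1 - lam) * (mu * z ^ (l - 1) + (1 - mu) * z ^ l))"
    using assms by (intro nn_integral_lindley[where f="\<lambda>l. z ^ l"]) auto
  ultimately show ?thesis by (simp only: ennreal_leI)
qed

lemma expected_queue_power_le_geometric:
  assumes "j < n" "0 \<le> lam" "lam \<le> 1" "0 \<le> mu" "mu \<le> 1" "0 < z"
  shows "expected_queue (slot_pmf lam mu n) j (\<lambda>q. ennreal (z ^ q)) l t
    \<le> ennreal (increment_mgf lam mu z ^ t * z ^ l + mu * (1 - lam) * (\<Sum>i<t. increment_mgf lam mu z ^ i))"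
proof -
  let ?\<phi> = "increment_mgf lam mu z" and ?q = "mu * (1 - lam)"
  have \<phi>: "0 \<le> ?\<phi>" using assms by (intro increment_mgf_nonneg)
  show ?thesis
  proof (induction t arbitrary: l)
    case (Suc t)
    let ?B = "?q * (\<Sum>i<t. ?\<phi> ^ i)"
    have "0 \<le> ?B" using assms \<phi> by (intro mult_nonneg_nonneg sum_nonneg) auto
    have "expected_queue (slot_pmf lam mu n) j (\<lambda>q. ennreal (z ^ q)) l (Suc t)
        \<le> (\<integral>\<^sup>+x. ennreal (?\<phi> ^ t * z ^ lindley l (fst x) (snd x j) + ?B) \<partial>slot_pmf lam mu n)"
      unfolding expected_queue_Suc by (intro nn_integral_mono Suc.IH)
    also have "\<dots> = ennreal (?\<phi> ^ t) * (\<integral>\<^sup>+x. ennreal (z ^ lindley l (fst x) (snd x j)) \<partial>slot_pmf lam mu n)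
        + ennreal ?B"
      using \<phi> \<open>0 \<le> ?B\<close> assms
      by (simp add: ennreal_plus ennreal_mult nn_integral_add nn_integral_cmult measure_pmf.emeasure_space_1)
    also have "\<dots> \<le> ennreal (?\<phi> ^ t) * ennreal (?\<phi> * z ^ l + ?q) + ennreal ?B"
      using assms by (intro add_right_mono mult_left_mono nn_integral_lindley_power_le) auto
    also have "\<dots> = ennreal (?\<phi> ^ t * (?\<phi> * z ^ l + ?q) + ?B)"
      using \<phi> \<open>0 \<le> ?B\<close> assms by (intro ennreal_mult_add) auto
    also have "\<dots> = ennreal (?\<phi> ^ Suc t * z ^ l + ?q * (\<Sum>i<Suc t. ?\<phi> ^ i))"
      by (rule arg_cong[where f=ennreal]) (simp add: algebra_simps)
    finally show ?case .
  qed simp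
qed

lemma expected_queue_power_le:
  assumes "j < n" "0 \<le> lam" "lam \<le> 1" "0 \<le> mu" "mu \<le> 1" "0 < z"
    and less_1: "increment_mgf lam mu z < 1"
  shows "expected_queue (slot_pmf lam mu n) j (\<lambda>q. ennreal (z ^ q)) 0 t
    \<le> ennreal (1 + mu * (1 - lam) / (1 - increment_mgf lam mu z))"
proof -
  let ?\<phi> = "increment_mgf lam mu z" and ?q = "mu * (1 - lam)"
  have \<phi>: "0 \<le> ?\<phi>" using assms by (intro increment_mgf_nonneg)
  note induct_bound = expected_queue_power_le_geometric[OF assms(1-6), of 0 t]
  have "(\<Sum>i<t. ?\<phi> ^ i) = (1 - ?\<phi> ^ t) / (1 - ?\<phi>)" using less_1 by (simp add: sum_gp_strict)
  also have "\<dots> \<le> 1 / (1 - ?\<phi>)" using \<phi> less_1 by (intro divide_right_mono) auto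
  finally have "?q * (\<Sum>i<t. ?\<phi> ^ i) \<le> ?q * (1 / (1 - ?\<phi>))"
    using assms by (intro mult_left_mono) auto
  moreover have "?\<phi> ^ t \<le> 1" using \<phi> less_1 by (simp add: power_le_one)
  ultimately have "?\<phi> ^ t * z ^ 0 + ?q * (\<Sum>i<t. ?\<phi> ^ i) \<le> 1 + ?q / (1 - ?\<phi>)" by simp
  with induct_bound show ?thesis using ennreal_leI order_trans by blast
qed

lemma quadratic_le_exponential:
  fixes z :: real assumes "1 < z"
  shows "\<exists>K\<ge>0. \<forall>l::nat. real (l * (l + 1)) \<le> K * z ^ l"
proof -
  have "(\<lambda>l::nat. real l * (real l + 1) / z ^ l) \<longlonglongrightarrow> 0" using assms by real_asymp
  then have "Bseq (\<lambda>l::nat. real l * (real l + 1) / z ^ l)" by (intro convergent_imp_Bseq convergentI)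
  then obtain K where K: "K > 0" "\<And>l. norm (real l * (real l + 1) / z ^ l) \<le> K"
    unfolding Bseq_def by blast
  have "real (l * (l + 1)) \<le> K * z ^ l" for l :: nat
  proof -
    have "0 < z ^ l" using assms by simp
    then show ?thesis using K(2)[of l] by (simp add: divide_le_eq algebra_simps)
  qed
  then show ?thesis using K(1) by (intro exI[of _ K]) auto
qed

lemma expected_queue_quadratic_bounded:
  assumes "j < n" "0 < lam" "lam < mu" "mu < 1"
  shows "\<exists>C\<ge>0. \<forall>N. expected_queue (slot_pmf lam mu n) j (\<lambda>q. ennreal (real (q * (q + 1)))) 0 N \<le> ennreal C"
proof -
  obtain z where z: "1 < z" "increment_mgf lam mu z < 1"
    using exists_increment_mgf_less_1 assms by blast
  obtain K where K: "K \<ge> 0" "\<And>l::nat. real (l * (l + 1)) \<le> K * z ^ l"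
    using quadratic_le_exponential[OF z(1)] by blast
  define C where "C = K * (1 + mu * (1 - lam) / (1 - increment_mgf lam mu z))"
  have "expected_queue (slot_pmf lam mu n) j (\<lambda>q. ennreal (real (q * (q + 1)))) 0 N \<le> ennreal C" for N
  proof -
    have "expected_queue (slot_pmf lam mu n) j (\<lambda>q. ennreal (real (q * (q + 1)))) 0 N
        \<le> expected_queue (slot_pmf lam mu n) j (\<lambda>q. ennreal K * ennreal (z ^ q)) 0 N"
    proof (unfold expected_queue_def, intro nn_integral_mono)
      fix \<omega>
      have "ennreal (real (queue j 0 N \<omega> * (queue j 0 N \<omega> + 1))) \<le> ennreal (K * z ^ queue j 0 N \<omega>)"
        by (rule ennreal_leI) (rule K(2))
      also have "\<dots> = ennreal K * ennreal (z ^ queue j 0 N \<omega>)"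
        using K z by (intro ennreal_mult) auto
      finally show "ennreal (real (queue j 0 N \<omega> * (queue j 0 N \<omega> + 1))) \<le> \<dots>" .
    qed
    also have "\<dots> = ennreal K * expected_queue (slot_pmf lam mu n) j (\<lambda>q. ennreal (z ^ q)) 0 N"
      unfolding expected_queue_def by (rule nn_integral_cmult) (rule measurable_compose[OF measurable_queue], simp)
    also have "\<dots> \<le> ennreal K * ennreal (1 + mu * (1 - lam) / (1 - increment_mgf lam mu z))"
      using assms z by (intro mult_left_mono expected_queue_power_le) auto
    also have "\<dots> = ennreal C"
      unfolding C_def using K assms z
      by (intro ennreal_mult[symmetric] add_nonneg_nonneg divide_nonneg_nonneg mult_nonneg_nonneg) auto
    finally show ?thesis .
  qed
  moreover have "0 \<le> C" unfolding C_def using K assms z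
    by (intro mult_nonneg_nonneg add_nonneg_nonneg divide_nonneg_nonneg) auto
  ultimately show ?thesis by blast
qed

lemma nn_integral_sum_queue:
  "(\<integral>\<^sup>+\<omega>. of_nat (\<Sum>d<N. queue j 0 (Suc d) \<omega>) \<partial>sample_space lam mu n)
    = (\<Sum>t<Suc N. expected_queue (slot_pmf lam mu n) j (\<lambda>q. ennreal (real q)) 0 t)"
proof -
  have "(\<integral>\<^sup>+\<omega>. of_nat (\<Sum>d<N. queue j 0 (Suc d) \<omega>) \<partial>sample_space lam mu n)
      = (\<integral>\<^sup>+\<omega>. (\<Sum>d<N. ennreal (real (queue j 0 (Suc d) \<omega>))) \<partial>sample_space lam mu n)"
    by (simp add: of_nat_sum ennreal_of_nat_eq_real_of_nat)
  also have "\<dots> = (\<Sum>d<N. expected_queue (slot_pmf lam mu n) j (\<lambda>q. ennreal (real q)) 0 (Suc d))"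
    unfolding sample_space_def expected_queue_def
    by (rule nn_integral_sum) (rule measurable_compose[OF measurable_queue], simp)
  also have "\<dots> = (\<Sum>t<Suc N. expected_queue (slot_pmf lam mu n) j (\<lambda>q. ennreal (real q)) 0 t)"
    by (simp add: sum.lessThan_Suc_shift del: sum.lessThan_Suc)
  finally show ?thesis .
qed

lemma sum_expected_queue_ge:
  fixes lam mu :: real
  assumes "j < n" "0 \<le> lam" "lam < mu" "mu \<le> 1" and "0 \<le> C"
    and C: "expected_queue (slot_pmf lam mu n) j (\<lambda>q. ennreal (real (q * (q + 1)))) 0 N \<le> ennreal C"
  shows "ennreal ((2 * lam * (1 - mu) * N - C) / (2 * (mu - lam)))
    \<le> (\<Sum>t<N. expected_queue (slot_pmf lam mu n) j (\<lambda>q. ennreal (real q)) 0 t)" (is "_ \<le> ?S")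
proof (cases "?S = \<top>")
  case False
  then obtain s where s: "?S = ennreal s" "0 \<le> s" by (cases ?S) auto
  have "ennreal (2 * lam * (1 - mu) * N) = ennreal (2 * lam * (1 - mu) * N) + ennreal (real (0 * (0 + 1::nat)))"
    by simp
  also have "\<dots> =
      ennreal (2 * (mu - lam)) * ?S + expected_queue (slot_pmf lam mu n) j (\<lambda>q. ennreal (real (q * (q + 1)))) 0 N"
    by (rule expected_queue_quadratic_identity[symmetric]) (use assms in auto)
  also have "\<dots> \<le> ennreal (2 * (mu - lam)) * ennreal s + ennreal C"
    unfolding s by (rule add_left_mono[OF C])
  also have "\<dots> = ennreal (2 * (mu - lam) * s + C)"
    using assms s by (intro ennreal_mult_add) auto
  finally have "2 * lam * (1 - mu) * N \<le> 2 * (mu - lam) * s + C"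
    using assms s by (subst (asm) ennreal_le_iff) auto
  then have "(2 * lam * (1 - mu) * N - C) / (2 * (mu - lam)) \<le> s"
    using assms by (simp add: divide_le_eq algebra_simps)
  then show ?thesis unfolding s by (rule ennreal_leI)
next
  case True
  then show ?thesis by (simp only: top_greatest)
qed

lemma avg_delay_ge:
  fixes \<sigma> :: "('F::field) scheme"
  assumes "j < n" "0 < lam" "lam < mu" "mu < 1" and adm: "admissible \<sigma>"
  shows "ennreal (lam * (1 - mu) / (mu - lam)) \<le> avg_delay lam mu n \<sigma> j"
proof -
  obtain C where "0 \<le> C"
    and C: "\<And>N. expected_queue (slot_pmf lam mu n) j (\<lambda>q. ennreal (real (q * (q + 1)))) 0 N \<le> ennreal C"
    using expected_queue_quadratic_bounded assms by blast
  define b where "b N = lam * (1 - mu) / (mu - lam) - C / (2 * (mu - lam)) / N" for N :: nat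
  have "ennreal (b N) \<le> (\<Sum>k<N. exp_delay lam mu n \<sigma> j k) / of_nat N" if "1 \<le> N" for N
  proof -
    define y where "y = (2 * lam * (1 - mu) * N - C) / (2 * (mu - lam))"
    have "y / N = 2 * lam * (1 - mu) * N / (2 * (mu - lam)) / N - C / (2 * (mu - lam)) / N"
      unfolding y_def by (simp add: diff_divide_distrib)
    also have "2 * lam * (1 - mu) * N / (2 * (mu - lam)) / N = lam * (1 - mu) / (mu - lam)"
      using that assms by (simp add: field_simps)
    finally have "b N = y / N" unfolding b_def by simp
    have "ennreal y \<le> (\<Sum>t<N. expected_queue (slot_pmf lam mu n) j (\<lambda>q. ennreal (real q)) 0 t)"
      unfolding y_def using assms \<open>0 \<le> C\<close> C by (intro sum_expected_queue_ge) auto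
    also have "\<dots> \<le> (\<Sum>t<Suc N. expected_queue (slot_pmf lam mu n) j (\<lambda>q. ennreal (real q)) 0 t)"
      by (intro sum_mono2) auto
    also have "\<dots> \<le> (\<Sum>k<N. exp_delay lam mu n \<sigma> j k)"
      unfolding nn_integral_sum_queue[symmetric] by (rule nn_integral_sum_queue_le_sum_exp_delay[OF adm])
    finally have y: "ennreal y \<le> (\<Sum>k<N. exp_delay lam mu n \<sigma> j k)" .
    show ?thesis
    proof (cases "0 \<le> y")
      case True
      have "ennreal (b N) = ennreal y / of_nat N"
        using True that \<open>b N = y / N\<close> by (simp add: divide_ennreal ennreal_of_nat_eq_real_of_nat)
      also have "\<dots> \<le> (\<Sum>k<N. exp_delay lam mu n \<sigma> j k) / of_nat N"
        by (rule divide_right_mono_ennreal[OF y])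
      finally show ?thesis .
    next
      case False
      then have "b N \<le> 0" using that \<open>b N = y / N\<close> by (simp add: divide_nonpos_pos)
      then show ?thesis by (simp add: ennreal_neg)
    qed
  qed
  then have "limsup (\<lambda>N. ennreal (b N)) \<le> avg_delay lam mu n \<sigma> j"
    unfolding avg_delay_def by (intro Limsup_mono) (auto simp: eventually_sequentially)
  moreover have "(\<lambda>N. ennreal (b N)) \<longlonglongrightarrow> ennreal (lam * (1 - mu) / (mu - lam))"
    unfolding b_def by (intro tendsto_ennrealI tendsto_eq_intros lim_const_over_n) auto
  ultimately show ?thesis by (simp add: lim_imp_Limsup)
qed

lemma avg_delay_ge_over_one_minus_load:
  fixes \<sigma> :: "('F::field) scheme"
  assumes "j < n" "0 < lam" "lam < mu" "mu < 1" "admissible \<sigma>" and c: "c \<le> lam / mu * (1 - mu)"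
  shows "ennreal (c / (1 - lam / mu)) \<le> avg_delay lam mu n \<sigma> j"
proof -
  have "c / (1 - lam / mu) = c * mu / (mu - lam)" using assms by (simp add: field_simps)
  also have "\<dots> \<le> lam * (1 - mu) / (mu - lam)"
    using assms c by (intro divide_right_mono) (auto simp: field_simps)
  finally show ?thesis using avg_delay_ge[OF assms(1-5)] by (meson ennreal_leI order_trans)
qed

lemma const_le_load_mult_fixed_mu:
  fixes lam mu :: real
  assumes "0 < mu" "mu < 1" "1 - 1 / 2 < lam / mu"
  shows "(1 - mu) / 2 \<le> lam / mu * (1 - mu)"
  using assms mult_right_mono[of "1 / 2" "lam / mu" "1 - mu"] by simp

lemma const_le_load_mult_fixed_lam:
  fixes lam mu :: real
  assumes "0 < lam" "lam < mu" "mu < 1" "1 - (1 - lam) / (1 + lam) < lam / mu"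
  shows "lam * (1 - lam) / 2 \<le> lam / mu * (1 - mu)"
proof -
  have "2 * lam / (1 + lam) < lam / mu" using assms(4) assms(1) by (simp add: field_simps)
  then have "lam * (2 * mu) < lam * (1 + lam)" using assms by (simp add: field_simps)
  then have "2 * mu < 1 + lam" using assms(1) by (simp only: mult_less_cancel_left_pos)
  then have "(1 - lam) / 2 \<le> 1 - mu" by simp
  moreover have "lam \<le> lam / mu" using assms by (simp add: field_simps)
  ultimately show ?thesis
    using assms mult_mono[of lam "lam / mu" "(1 - lam) / 2" "1 - mu"] by simp
qed

theorem lemma8:
  fixes n :: nat
  assumes "n \<ge> 1"
  shows "(\<forall>mu. 0 < mu \<and> mu < 1 \<longrightarrow> (\<exists>c>0. \<exists>\<delta>>0. \<forall>lam. 0 < lam \<and> lam < mu \<and> 1 - \<delta> < lam / mu \<longrightarrow>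
            (\<forall>\<sigma> :: ('F::{field,finite}) scheme. admissible \<sigma> \<longrightarrow> (\<forall>j<n.
               ennreal (c / (1 - lam / mu)) \<le> avg_delay lam mu n \<sigma> j)))) \<and>
         (\<forall>lam. 0 < lam \<and> lam < 1 \<longrightarrow> (\<exists>c>0. \<exists>\<delta>>0. \<forall>mu. lam < mu \<and> mu < 1 \<and> 1 - \<delta> < lam / mu \<longrightarrow>
            (\<forall>\<sigma> :: 'F scheme. admissible \<sigma> \<longrightarrow> (\<forall>j<n.
               ennreal (c / (1 - lam / mu)) \<le> avg_delay lam mu n \<sigma> j))))"
proof (intro conjI allI impI)
  fix mu :: real assume mu: "0 < mu \<and> mu < 1"
  then have bound: "\<forall>lam. 0 < lam \<and> lam < mu \<and> 1 - 1 / 2 < lam / mu \<longrightarrow>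
      (\<forall>\<sigma> :: 'F scheme. admissible \<sigma> \<longrightarrow> (\<forall>j<n.
         ennreal ((1 - mu) / 2 / (1 - lam / mu)) \<le> avg_delay lam mu n \<sigma> j))"
    by (blast intro: avg_delay_ge_over_one_minus_load const_le_load_mult_fixed_mu)
  have "0 < (1 - mu) / 2" "0 < (1 / 2 :: real)" using mu by simp_all
  then show "\<exists>c>0. \<exists>\<delta>>0. \<forall>lam. 0 < lam \<and> lam < mu \<and> 1 - \<delta> < lam / mu \<longrightarrow>
      (\<forall>\<sigma> :: 'F scheme. admissible \<sigma> \<longrightarrow> (\<forall>j<n. ennreal (c / (1 - lam / mu)) \<le> avg_delay lam mu n \<sigma> j))"
    using bound by blast
next
  fix lam :: real assume lam: "0 < lam \<and> lam < 1"
  then have bound: "\<forall>mu. lam < mu \<and> mu < 1 \<and> 1 - (1 - lam) / (1 + lam) < lam / mu \<longrightarrow>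
      (\<forall>\<sigma> :: 'F scheme. admissible \<sigma> \<longrightarrow> (\<forall>j<n.
         ennreal (lam * (1 - lam) / 2 / (1 - lam / mu)) \<le> avg_delay lam mu n \<sigma> j))"
    by (blast intro: avg_delay_ge_over_one_minus_load const_le_load_mult_fixed_lam)
  have "0 < lam * (1 - lam) / 2" "0 < (1 - lam) / (1 + lam)" using lam by simp_all
  then show "\<exists>c>0. \<exists>\<delta>>0. \<forall>mu. lam < mu \<and> mu < 1 \<and> 1 - \<delta> < lam / mu \<longrightarrow>
      (\<forall>\<sigma> :: 'F scheme. admissible \<sigma> \<longrightarrow> (\<forall>j<n. ennreal (c / (1 - lam / mu)) \<le> avg_delay lam mu n \<sigma> j))"
    using bound by blast
qed

end
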